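(* Let $\mathcal F_1$ be a finite set of partial patterns. Then there exists a finite set $\mathcal F_2$ of permutation patterns (permutation matrices) such that $C_n(\mathcal F_1)=C_n(\mathcal F_2)$ for all $n\in\mathbb N$.
   Context: A partial pattern is a $0$-$1$ matrix (not necessarily square) in which every row and every column contains at most one $1$; every permutation matrix is a partial pattern. An $n\times n$ permutation matrix $M$ contains a partial pattern $L$ if $L$ can be obtained from $M$ by deleting some rows and columns, and avoids $L$ otherwise. For a set $\mathcal F$ of partial patterns, $C_n(\mathcal F)$ is the number of $n\times n$ permutation matrices avoiding every partial pattern in $\mathcal F$. (For permutation matrices, this coincides with the usual notion of permutation pattern containment.) *)

theory Defs
  imports "HOL-Combinatorics.Permutations"
begin

text \<open>A 0-1 matrix with r rows and c columns is represented as a triple (r, c, A)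
  where A i j (for i < r, j < c) is True iff entry (i,j) equals 1
  (rows and columns indexed from 0; values of A outside the range are irrelevant).\<close>

type_synonym zo_matrix = "nat \<times> nat \<times> (nat \<Rightarrow> nat \<Rightarrow> bool)"

definition partial_pattern :: "zo_matrix \<Rightarrow> bool" where
  "partial_pattern L = (case L of (r, c, A) \<Rightarrow>
     (\<forall>i<r. \<forall>j1<c. \<forall>j2<c. A i j1 \<and> A i j2 \<longrightarrow> j1 = j2) \<and>
     (\<forall>j<c. \<forall>i1<r. \<forall>i2<r. A i1 j \<and> A i2 j \<longrightarrow> i1 = i2))"

definition permutation_matrix :: "zo_matrix \<Rightarrow> bool" where
  "permutation_matrix P = (case P of (r, c, A) \<Rightarrow> r = c \<and>
     (\<forall>i<r. \<exists>!j. j < c \<and> A i j) \<and>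
     (\<forall>j<c. \<exists>!i. i < r \<and> A i j))"

definition perm_mat :: "nat \<Rightarrow> (nat \<Rightarrow> nat) \<Rightarrow> zo_matrix" where
  "perm_mat n \<sigma> = (n, n, \<lambda>i j. i < n \<and> j < n \<and> \<sigma> i = j)"

text \<open>M contains L if L is obtained from M by deleting some rows and columns, i.e.
  there are strictly increasing row and column selections under which the entries agree.\<close>
definition contains :: "zo_matrix \<Rightarrow> zo_matrix \<Rightarrow> bool" where
  "contains M L = (case M of (m, k, B) \<Rightarrow> case L of (r, c, A) \<Rightarrow>
     (\<exists>R C. strict_mono_on {..<r} R \<and> (\<forall>i<r. R i < m) \<and>
            strict_mono_on {..<c} C \<and> (\<forall>j<c. C j < k) \<and>
            (\<forall>i<r. \<forall>j<c. B (R i) (C j) = A i j)))"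

text \<open>C_n(F): number of n x n permutation matrices avoiding every pattern in F
  (counted via the bijection with permutations of {0..<n}).\<close>
definition C :: "nat \<Rightarrow> zo_matrix set \<Rightarrow> nat" where
  "C n F = card {\<sigma>. \<sigma> permutes {..<n} \<and> (\<forall>L\<in>F. \<not> contains (perm_mat n \<sigma>) L)}"

end

theory Submission
  imports Defs
begin

text \<open>If the rows \<open>R\<close> and columns \<open>Q\<close> of an occurrence of a pattern with \<open>r\<close> rows and
  \<open>c\<close> columns in the permutation matrix of \<open>\<sigma>\<close> are completed to the rows
  \<open>S = R \<union> \<sigma>\<inverse>(Q)\<close> and columns \<open>\<sigma>(S)\<close>, the resulting submatrix is again a permutation
  matrix, of size at most \<open>r + c\<close>, and it still contains the pattern. Hence a permutation
  avoids \<open>\<F>\<^sub>1\<close> iff it avoids all permutation matrices of size at most \<open>max (r + c)\<close> that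
  contain a member of \<open>\<F>\<^sub>1\<close>; the converse direction is transitivity of containment.\<close>

lemma containsI:
  assumes "strict_mono_on {..<r} R" "R ` {..<r} \<subseteq> {..<m}"
    and "strict_mono_on {..<c} Q" "Q ` {..<c} \<subseteq> {..<k}"
    and "\<And>i j. i < r \<Longrightarrow> j < c \<Longrightarrow> B (R i) (Q j) = A i j"
  shows "contains (m, k, B) (r, c, A)"
  unfolding contains_def using assms
  by (simp only: prod.case) (blast intro: image_subset_iff[THEN iffD1])

lemma containsE:
  assumes "contains (m, k, B) (r, c, A)"
  obtains R Q where "strict_mono_on {..<r} R" "R ` {..<r} \<subseteq> {..<m}"
    and "strict_mono_on {..<c} Q" "Q ` {..<c} \<subseteq> {..<k}"
    and "\<And>i j. i < r \<Longrightarrow> j < c \<Longrightarrow> B (R i) (Q j) = A i j"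
  using assms unfolding contains_def by (auto simp: image_subset_iff)

lemma contains_trans:
  assumes "contains M P" and "contains P L"
  shows "contains M L"
proof -
  obtain m k B r' c' A' r c A where eqs: "M = (m, k, B)" "P = (r', c', A')" "L = (r, c, A)"
    by (metis prod_cases3)
  obtain R1 Q1 where 1: "strict_mono_on {..<r'} R1" "R1 ` {..<r'} \<subseteq> {..<m}"
    "strict_mono_on {..<c'} Q1" "Q1 ` {..<c'} \<subseteq> {..<k}"
    "\<And>i j. i < r' \<Longrightarrow> j < c' \<Longrightarrow> B (R1 i) (Q1 j) = A' i j"
    using assms(1) eqs containsE by metis
  obtain R2 Q2 where 2: "strict_mono_on {..<r} R2" "R2 ` {..<r} \<subseteq> {..<r'}"
    "strict_mono_on {..<c} Q2" "Q2 ` {..<c} \<subseteq> {..<c'}"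
    "\<And>i j. i < r \<Longrightarrow> j < c \<Longrightarrow> A' (R2 i) (Q2 j) = A i j"
    using assms(2) eqs containsE by metis
  have "contains (m, k, B) (r, c, A)"
  proof (rule containsI[of _ "R1 \<circ> R2" _ _ "Q1 \<circ> Q2"])
    show "strict_mono_on {..<r} (R1 \<circ> R2)" "strict_mono_on {..<c} (Q1 \<circ> Q2)"
      using monotone_on_o 1 2 by blast+
  qed (use 1 2 in \<open>auto simp: image_subset_iff\<close>)
  then show ?thesis using eqs by simp
qed

lemma strict_mono_on_inv_into:
  fixes f :: "'a::linorder \<Rightarrow> 'b::linorder"
  assumes "strict_mono_on A f"
  shows "strict_mono_on (f ` A) (inv_into A f)"
  by (rule strict_mono_onI)
    (auto simp: strict_mono_on_less[OF assms] strict_mono_on_imp_inj_on[OF assms])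

lemma strict_mono_enumeration:
  fixes S :: "'a::linorder set"
  assumes "finite S"
  obtains e where "strict_mono_on {..<card S} e" and "bij_betw e {..<card S} S"
proof
  let ?xs = "sorted_list_of_set S"
  show mono: "strict_mono_on {..<card S} ((!) ?xs)"
    by (rule strict_mono_onI) (simp add: sorted_wrt_nth_less)
  show "bij_betw ((!) ?xs) {..<card S} S"
    unfolding bij_betw_def
    using strict_mono_on_imp_inj_on[OF mono] set_conv_nth[of ?xs] assms
    by (auto simp: lessThan_def)
qed

lemma contains_in_restriction:
  fixes e :: "nat \<Rightarrow> 'a::linorder" and f :: "nat \<Rightarrow> 'b::linorder"
  assumes occurrence: "strict_mono_on {..<r} R" "strict_mono_on {..<c} Q"
      "\<And>i j. i < r \<Longrightarrow> j < c \<Longrightarrow> B (R i) (Q j) = A i j"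
    and rows: "strict_mono_on {..<m} e" "bij_betw e {..<m} S" "R ` {..<r} \<subseteq> S"
    and cols: "strict_mono_on {..<k} f" "bij_betw f {..<k} T" "Q ` {..<c} \<subseteq> T"
    and restriction: "\<And>i j. i < m \<Longrightarrow> j < k \<Longrightarrow> P i j = B (e i) (f j)"
  shows "contains (m, k, P) (r, c, A)"
proof (rule containsI[of _ "inv_into {..<m} e \<circ> R" _ _ "inv_into {..<k} f \<circ> Q"])
  have "strict_mono_on S (inv_into {..<m} e)" "strict_mono_on T (inv_into {..<k} f)"
    using strict_mono_on_inv_into[OF rows(1)] strict_mono_on_inv_into[OF cols(1)] rows(2) cols(2)
    by (simp_all add: bij_betw_def)
  then show "strict_mono_on {..<r} (inv_into {..<m} e \<circ> R)"
    and "strict_mono_on {..<c} (inv_into {..<k} f \<circ> Q)"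
    using monotone_on_o occurrence(1,2) rows(3) cols(3) by blast+
  have "R ` {..<r} \<subseteq> e ` {..<m}" "Q ` {..<c} \<subseteq> f ` {..<k}"
    using rows(2,3) cols(2,3) by (auto simp: bij_betw_def)
  then show "(inv_into {..<m} e \<circ> R) ` {..<r} \<subseteq> {..<m}"
    and "(inv_into {..<k} f \<circ> Q) ` {..<c} \<subseteq> {..<k}"
    by (simp_all add: image_subset_iff inv_into_into[THEN lessThan_iff[THEN iffD1]])
  fix i j assume "i < r" "j < c"
  then have "R i \<in> e ` {..<m}" "Q j \<in> f ` {..<k}"
    using \<open>R ` {..<r} \<subseteq> e ` {..<m}\<close> \<open>Q ` {..<c} \<subseteq> f ` {..<k}\<close> by auto
  then show "P ((inv_into {..<m} e \<circ> R) i) ((inv_into {..<k} f \<circ> Q) j) = A i j"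
    using restriction[of "inv_into {..<m} e (R i)" "inv_into {..<k} f (Q j)"]
      occurrence(3)[OF \<open>i < r\<close> \<open>j < c\<close>]
    by (simp add: f_inv_into_f inv_into_into[THEN lessThan_iff[THEN iffD1]])
qed

lemma permutes_conjugate_enumerations:
  assumes "bij_betw g S T" "bij_betw e {..<m} S" "bij_betw f {..<m} T"
  shows "(\<lambda>i. if i < m then inv_into {..<m} f (g (e i)) else i) permutes {..<m}"
proof (rule bij_imp_permutes)
  have "bij_betw (inv_into {..<m} f \<circ> g \<circ> e) {..<m} {..<m}"
    using assms bij_betw_inv_into bij_betw_trans by metis
  then show "bij_betw (\<lambda>i. if i < m then inv_into {..<m} f (g (e i)) else i) {..<m} {..<m}"
    by (rule bij_betw_cong[THEN iffD1, rotated]) simp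
qed simp

lemma permutation_matrix_perm_mat:
  assumes "\<tau> permutes {..<m}"
  shows "permutation_matrix (perm_mat m \<tau>)"
  unfolding permutation_matrix_def perm_mat_def
  using permutes_in_image[OF assms] permutes_inj[OF assms] permutes_surj[OF assms]
  by (auto simp: inj_eq) (metis permutes_inverses(1)[OF assms])

lemma perm_mat_restriction:
  fixes e f :: "nat \<Rightarrow> nat"
  assumes perm: "\<sigma> permutes {..<n}" and "S \<subseteq> {..<n}"
    and e: "strict_mono_on {..<m} e" "bij_betw e {..<m} S"
    and f: "strict_mono_on {..<m} f" "bij_betw f {..<m} (\<sigma> ` S)"
  obtains \<tau> where "\<tau> permutes {..<m}"
    and "\<And>i j. i < m \<Longrightarrow> j < m \<Longrightarrow> (e i < n \<and> f j < n \<and> \<sigma> (e i) = f j) = (\<tau> i = j)"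
    and "contains (perm_mat n \<sigma>) (perm_mat m \<tau>)"
proof -
  define \<tau> where "\<tau> = (\<lambda>i. if i < m then inv_into {..<m} f (\<sigma> (e i)) else i)"
  have "bij_betw \<sigma> S (\<sigma> ` S)"
    using permutes_inj[OF perm] by (simp add: bij_betw_def inj_on_subset[of _ UNIV])
  then have "\<tau> permutes {..<m}"
    unfolding \<tau>_def using e(2) f(2) by (rule permutes_conjugate_enumerations)
  have "\<sigma> ` S \<subseteq> {..<n}"
    using \<open>S \<subseteq> {..<n}\<close> permutes_in_image[OF perm] by auto
  have entries: "(e i < n \<and> f j < n \<and> \<sigma> (e i) = f j) = (\<tau> i = j)" if "i < m" "j < m" for i j
  proof -
    have "e i \<in> S" "f j \<in> \<sigma> ` S"
      using that e(2) f(2) by (auto simp: bij_betw_def)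
    moreover have "\<sigma> (e i) = f j \<longleftrightarrow> \<tau> i = j"
    proof
      assume "\<sigma> (e i) = f j"
      then show "\<tau> i = j"
        using that f(2) by (simp add: \<tau>_def bij_betw_def)
    next
      assume "\<tau> i = j"
      then show "\<sigma> (e i) = f j"
        using that \<open>e i \<in> S\<close> f(2) by (auto simp: \<tau>_def bij_betw_def f_inv_into_f)
    qed
    ultimately show ?thesis
      using \<open>S \<subseteq> {..<n}\<close> \<open>\<sigma> ` S \<subseteq> {..<n}\<close> by auto
  qed
  have "contains (perm_mat n \<sigma>) (perm_mat m \<tau>)"
    unfolding perm_mat_def
  proof (rule containsI[OF e(1) _ f(1)])
    show "e ` {..<m} \<subseteq> {..<n}" "f ` {..<m} \<subseteq> {..<n}"
      using e(2) f(2) \<open>S \<subseteq> {..<n}\<close> \<open>\<sigma> ` S \<subseteq> {..<n}\<close> by (simp_all add: bij_betw_def)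
  qed (simp add: entries)
  with \<open>\<tau> permutes {..<m}\<close> entries show thesis
    by (rule that)
qed

lemma perm_mat_pattern_in_small_perm_mat:
  assumes perm: "\<sigma> permutes {..<n}" and occurrence: "contains (perm_mat n \<sigma>) (r, c, A)"
  obtains m \<tau> where "m \<le> r + c" and "\<tau> permutes {..<m}"
    and "contains (perm_mat n \<sigma>) (perm_mat m \<tau>)" and "contains (perm_mat m \<tau>) (r, c, A)"
proof -
  obtain R Q where RQ: "strict_mono_on {..<r} R" "R ` {..<r} \<subseteq> {..<n}"
    "strict_mono_on {..<c} Q" "Q ` {..<c} \<subseteq> {..<n}"
    "\<And>i j. i < r \<Longrightarrow> j < c \<Longrightarrow> (R i < n \<and> Q j < n \<and> \<sigma> (R i) = Q j) = A i j"
    using occurrence unfolding perm_mat_def by (rule containsE) blast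
  define S where "S = R ` {..<r} \<union> inv \<sigma> ` Q ` {..<c}"
  define m where "m = card S"
  have "S \<subseteq> {..<n}"
    using RQ(2,4) permutes_in_image[OF permutes_inv[OF perm]] by (auto simp: S_def)
  have "Q ` {..<c} \<subseteq> \<sigma> ` S"
    using permutes_inverses(1)[OF perm] by (force simp: S_def)
  have "m \<le> card (R ` {..<r}) + card ((inv \<sigma> \<circ> Q) ` {..<c})"
    unfolding m_def S_def image_comp by (rule card_Un_le)
  also have "\<dots> \<le> r + c"
    using card_image_le[of "{..<r}" R] card_image_le[of "{..<c}" "inv \<sigma> \<circ> Q"] by simp
  finally have "m \<le> r + c" .
  obtain e where e: "strict_mono_on {..<m} e" "bij_betw e {..<m} S"
    using strict_mono_enumeration[of S] by (auto simp: m_def S_def)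
  obtain f where f: "strict_mono_on {..<m} f" "bij_betw f {..<m} (\<sigma> ` S)"
    using strict_mono_enumeration[of "\<sigma> ` S"] card_image[OF permutes_inj_on[OF perm]]
    by (auto simp: m_def S_def)
  obtain \<tau> where \<tau>: "\<tau> permutes {..<m}" "contains (perm_mat n \<sigma>) (perm_mat m \<tau>)"
    and entries: "\<And>i j. i < m \<Longrightarrow> j < m \<Longrightarrow> (e i < n \<and> f j < n \<and> \<sigma> (e i) = f j) = (\<tau> i = j)"
    using perm_mat_restriction[OF perm \<open>S \<subseteq> {..<n}\<close> e f] by metis
  have "contains (perm_mat m \<tau>) (r, c, A)"
    unfolding perm_mat_def
  proof (rule contains_in_restriction[where B = "\<lambda>i j. i < n \<and> j < n \<and> \<sigma> i = j"
        and S = S and T = "\<sigma> ` S"])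
    show "R ` {..<r} \<subseteq> S"
      by (simp add: S_def)
    show "(i < m \<and> j < m \<and> \<tau> i = j) = (e i < n \<and> f j < n \<and> \<sigma> (e i) = f j)"
      if "i < m" "j < m" for i j
      using entries[OF that] that by simp
  qed (use RQ e f \<open>Q ` {..<c} \<subseteq> \<sigma> ` S\<close> in auto)
  then show thesis
    using that \<open>m \<le> r + c\<close> \<tau> by blast
qed

definition perm_patterns_containing :: "nat \<Rightarrow> zo_matrix set \<Rightarrow> zo_matrix set" where
  "perm_patterns_containing N F =
     {perm_mat m \<tau> | m \<tau>. m \<le> N \<and> \<tau> permutes {..<m} \<and> (\<exists>L\<in>F. contains (perm_mat m \<tau>) L)}"

lemma finite_perm_patterns_containing: "finite (perm_patterns_containing N F)"
proof (rule finite_subset)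
  show "perm_patterns_containing N F \<subseteq> (\<Union>m\<le>N. perm_mat m ` {\<tau>. \<tau> permutes {..<m}})"
    unfolding perm_patterns_containing_def by auto
qed (simp add: finite_permutations)

lemma avoids_iff_avoids_perm_patterns_containing:
  assumes perm: "\<sigma> permutes {..<n}" and size: "\<And>r c A. (r, c, A) \<in> F \<Longrightarrow> r + c \<le> N"
  shows "(\<forall>L\<in>F. \<not> contains (perm_mat n \<sigma>) L) \<longleftrightarrow>
         (\<forall>P\<in>perm_patterns_containing N F. \<not> contains (perm_mat n \<sigma>) P)"
proof
  assume "\<forall>L\<in>F. \<not> contains (perm_mat n \<sigma>) L"
  then show "\<forall>P\<in>perm_patterns_containing N F. \<not> contains (perm_mat n \<sigma>) P"
    unfolding perm_patterns_containing_def using contains_trans[of "perm_mat n \<sigma>"] by blast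
next
  assume avoids: "\<forall>P\<in>perm_patterns_containing N F. \<not> contains (perm_mat n \<sigma>) P"
  show "\<forall>L\<in>F. \<not> contains (perm_mat n \<sigma>) L"
  proof (intro ballI notI)
    fix L assume "L \<in> F" and occurrence: "contains (perm_mat n \<sigma>) L"
    obtain r c A where L: "L = (r, c, A)"
      by (rule prod_cases3)
    obtain m \<tau> where "m \<le> r + c" "\<tau> permutes {..<m}"
      "contains (perm_mat n \<sigma>) (perm_mat m \<tau>)" "contains (perm_mat m \<tau>) L"
      using perm_mat_pattern_in_small_perm_mat[OF perm occurrence[unfolded L]] L by blast
    moreover have "r + c \<le> N"
      using size \<open>L \<in> F\<close> L by blast
    ultimately have "perm_mat m \<tau> \<in> perm_patterns_containing N F"
      unfolding perm_patterns_containing_def using \<open>L \<in> F\<close> by force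
    then show False
      using avoids \<open>contains (perm_mat n \<sigma>) (perm_mat m \<tau>)\<close> by blast
  qed
qed

theorem proposition3p1:
  assumes "finite F1" and "\<forall>L\<in>F1. partial_pattern L"
  shows "\<exists>F2. finite F2 \<and> (\<forall>P\<in>F2. permutation_matrix P) \<and> (\<forall>n. C n F1 = C n F2)"
proof -
  define N where "N = (\<Sum>(r, c, A) \<in> F1. r + c)"
  have size: "r + c \<le> N" if "(r, c, A) \<in> F1" for r c A
  proof -
    have "(\<lambda>(r, c, A). r + c) (r, c, A) \<le> N"
      unfolding N_def by (rule member_le_sum) (use that assms(1) in auto)
    then show ?thesis by simp
  qed
  have "C n F1 = C n (perm_patterns_containing N F1)" for n
    unfolding C_def
    by (intro arg_cong[where f = card] Collect_cong conj_cong refl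
        avoids_iff_avoids_perm_patterns_containing size)
  moreover have "\<forall>P\<in>perm_patterns_containing N F1. permutation_matrix P"
    unfolding perm_patterns_containing_def using permutation_matrix_perm_mat by auto
  ultimately show ?thesis
    using finite_perm_patterns_containing[of N F1] by blast
qed

end
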